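(* Let $m,n\ge1$ and let $\mathcal G=\mathcal G(A,\tau)$ be the Kac–Moody superalgebra described below. Then in $\mathcal G$: (1) $[e_{ij},e_{kl}]=\delta_{j-1,k}e_{il}$ for all $i\ge j$, $k\ge l$ in $\Omega$ with $(i,j)\ge(k,l)$ lexicographically and $k<m+n$; (2) $[e_{m+n,i},[e_{m+n,j},e_{m+n,k}]]=0$ for all $i,j,k\in\Omega$; (3) $[[e_{m+n,i},e_{m+n,j}],[e_{m+n,k},e_{m+n,l}]]=0$ for all $i,j,k,l\in\Omega$.
   Context: Let $k$ be a field with $\mathrm{char}(k)\ne2,3$. $\Omega=\{1,\dots,m+n\}$, $\tau=\{n\}$, and $A=(a_{ij})$ with $a_{ii}=2$ for $i\ne n$, $a_{nn}=0$, $a_{n,n+1}=1$, $a_{m+n,m+n-1}=-2$, $a_{ij}=-1$ if $|i-j|=1$ and $(i,j)\notin\{(n,n+1),(m+n,m+n-1)\}$, $a_{ij}=0$ if $|i-j|>1$. The Kac–Moody superalgebra $\mathcal G(A,\tau)$ is the Lie superalgebra generated by $e_i,h_i,f_i$ ($i\in\Omega$), with $e_n,f_n$ odd and all other generators even, subject to: $[h_i,h_j]=0$; $[e_i,f_j]=\delta_{ij}h_i$; $[e_j,h_i]=-a_{ij}e_j$; $[h_i,f_j]=-a_{ij}f_j$; $(\mathrm{ad}e_i)^{1-n_{ij}}e_j=0$ and $e_i(\widetilde{\mathrm{ad}}e_j)^{1-n_{ji}}=0$ for $i>j$; $[[e_{k+1},e_k],[e_k,e_{k-1}]]=0$ for $k\in\eta$;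 and the same relations with $f$'s in place of $e$'s. Here $(\mathrm{ad}x)^ny=[x,[x,\dots,[x,y]\dots]]$, $x(\widetilde{\mathrm{ad}}y)^n=[\dots[[x,y],y],\dots,y]$ ($n$ times), $n_{ij}=a_{ij}$ if $a_{ii}=2$ or $a_{ij}=0$, $n_{ij}=-1$ if $a_{ii}=0\ne a_{ij}$, and $\eta$ is the set of $k$ with $k\in\tau$, $k\pm1\notin\tau$ (and $k\pm1\in\Omega$), $a_{kk}=0$, $a_{k+1,k-1}=0$, $a_{k,k+1}+a_{k,k-1}=0$. Notation: for $i>j$, $e_{ij}=[e_i,[e_{i-1},[\dots,[e_{j+1},e_j]\dots]]]$, and $e_{ii}=e_i$. Lexicographic order on pairs: $(i,j)>(k,l)$ iff $i>k$, or $i=k$ and $j>l$. *)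

theory Defs
  imports Main HOL.Vector_Spaces
begin

definition hom_part :: "'v set \<Rightarrow> 'v set \<Rightarrow> bool \<Rightarrow> 'v set" where
  "hom_part V0 V1 p = (if p then V1 else V0)"

definition ssign :: "bool \<Rightarrow> bool \<Rightarrow> 'v::ab_group_add \<Rightarrow> 'v" where
  "ssign p q x = (if p \<and> q then - x else x)"

definition lie_superalgebra ::
  "('k::field \<Rightarrow> 'v::ab_group_add \<Rightarrow> 'v) \<Rightarrow> 'v set \<Rightarrow> 'v set \<Rightarrow> ('v \<Rightarrow> 'v \<Rightarrow> 'v) \<Rightarrow> bool" where
  "lie_superalgebra sc V0 V1 br \<longleftrightarrow>
     vector_space sc \<and>
     (\<forall>p. 0 \<in> hom_part V0 V1 p \<and>
          (\<forall>x\<in>hom_part V0 V1 p. \<forall>y\<in>hom_part V0 V1 p. x + y \<in> hom_part V0 V1 p) \<and>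
          (\<forall>c. \<forall>x\<in>hom_part V0 V1 p. sc c x \<in> hom_part V0 V1 p)) \<and>
     V0 \<inter> V1 = {0} \<and>
     (\<forall>v. \<exists>a\<in>V0. \<exists>b\<in>V1. v = a + b) \<and>
     (\<forall>x y z. br (x + y) z = br x z + br y z) \<and>
     (\<forall>x y z. br x (y + z) = br x y + br x z) \<and>
     (\<forall>c x y. br (sc c x) y = sc c (br x y)) \<and>
     (\<forall>c x y. br x (sc c y) = sc c (br x y)) \<and>
     (\<forall>p q. \<forall>x\<in>hom_part V0 V1 p. \<forall>y\<in>hom_part V0 V1 q.
          br x y \<in> hom_part V0 V1 (p \<noteq> q)) \<and>
     (\<forall>p q. \<forall>x\<in>hom_part V0 V1 p. \<forall>y\<in>hom_part V0 V1 q.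
          br x y = - ssign p q (br y x)) \<and>
     (\<forall>p q r. \<forall>x\<in>hom_part V0 V1 p. \<forall>y\<in>hom_part V0 V1 q. \<forall>z\<in>hom_part V0 V1 r.
          br x (br y z) = br (br x y) z + ssign p q (br y (br x z)))"

definition cartan :: "nat \<Rightarrow> nat \<Rightarrow> nat \<Rightarrow> nat \<Rightarrow> int" where
  "cartan m n i j =
     (if i = j then (if i = n then 0 else 2)
      else if i = n \<and> j = n + 1 then 1
      else if i = m + n \<and> j = m + n - 1 then -2
      else if i = j + 1 \<or> j = i + 1 then -1
      else 0)"

definition nmat :: "(nat \<Rightarrow> nat \<Rightarrow> int) \<Rightarrow> nat \<Rightarrow> nat \<Rightarrow> int" where
  "nmat a i j = (if a i i = 2 \<or> a i j = 0 then a i j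
                 else if a i i = 0 \<and> a i j \<noteq> 0 then -1 else 0)"

definition eta :: "nat set \<Rightarrow> nat set \<Rightarrow> (nat \<Rightarrow> nat \<Rightarrow> int) \<Rightarrow> nat set" where
  "eta Om tau a = {k. k \<in> tau \<and> k + 1 \<notin> tau \<and> k - 1 \<notin> tau \<and> k + 1 \<in> Om \<and> k - 1 \<in> Om \<and>
       a k k = 0 \<and> a (k + 1) (k - 1) = 0 \<and> a k (k + 1) + a k (k - 1) = 0}"

definition adpow :: "('v \<Rightarrow> 'v \<Rightarrow> 'v) \<Rightarrow> 'v \<Rightarrow> nat \<Rightarrow> 'v \<Rightarrow> 'v" where
  "adpow br x k y = (br x ^^ k) y"
definition radpow :: "('v \<Rightarrow> 'v \<Rightarrow> 'v) \<Rightarrow> 'v \<Rightarrow> 'v \<Rightarrow> nat \<Rightarrow> 'v" where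
  "radpow br y x k = ((\<lambda>z. br z x) ^^ k) y"

definition km_rels ::
  "('k::field \<Rightarrow> 'v::ab_group_add \<Rightarrow> 'v) \<Rightarrow> 'v set \<Rightarrow> 'v set \<Rightarrow> ('v \<Rightarrow> 'v \<Rightarrow> 'v) \<Rightarrow>
   nat set \<Rightarrow> nat set \<Rightarrow> (nat \<Rightarrow> nat \<Rightarrow> int) \<Rightarrow>
   (nat \<Rightarrow> 'v) \<Rightarrow> (nat \<Rightarrow> 'v) \<Rightarrow> (nat \<Rightarrow> 'v) \<Rightarrow> bool" where
  "km_rels sc V0 V1 br Om tau a e h f \<longleftrightarrow>
     (\<forall>i\<in>Om. h i \<in> V0 \<and> e i \<in> hom_part V0 V1 (i \<in> tau) \<and> f i \<in> hom_part V0 V1 (i \<in> tau)) \<and>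
     (\<forall>i\<in>Om. \<forall>j\<in>Om. br (h i) (h j) = 0) \<and>
     (\<forall>i\<in>Om. \<forall>j\<in>Om. br (e i) (f j) = (if i = j then h i else 0)) \<and>
     (\<forall>i\<in>Om. \<forall>j\<in>Om. br (e j) (h i) = sc (- of_int (a i j)) (e j)) \<and>
     (\<forall>i\<in>Om. \<forall>j\<in>Om. br (h i) (f j) = sc (- of_int (a i j)) (f j)) \<and>
     (\<forall>i\<in>Om. \<forall>j\<in>Om. i > j \<longrightarrow>
        adpow br (e i) (nat (1 - nmat a i j)) (e j) = 0 \<and>
        radpow br (e i) (e j) (nat (1 - nmat a j i)) = 0 \<and>
        adpow br (f i) (nat (1 - nmat a i j)) (f j) = 0 \<and>
        radpow br (f i) (f j) (nat (1 - nmat a j i)) = 0) \<and>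
     (\<forall>k\<in>eta Om tau a.
        br (br (e (k + 1)) (e k)) (br (e k) (e (k - 1))) = 0 \<and>
        br (br (f (k + 1)) (f k)) (br (f k) (f (k - 1))) = 0)"

text \<open>e_ij = [e_i,[e_(i-1),...,[e_(j+1),e_j]...]] for i > j, e_ii = e_i.\<close>
primrec Eij :: "('v \<Rightarrow> 'v \<Rightarrow> 'v) \<Rightarrow> (nat \<Rightarrow> 'v) \<Rightarrow> nat \<Rightarrow> nat \<Rightarrow> 'v" where
  "Eij br e 0 j = e 0"
| "Eij br e (Suc i) j = (if Suc i \<le> j then e (Suc i) else br (e (Suc i)) (Eij br e i j))"

end

theory Submission
  imports Defs
begin

text \<open>For (1), a generator e_p with p <= i kills e_ij unless
  p = j - 1: distant generators commute, [e_i, e_il] = 0 by the quadratic Serre relations,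
  and for l <= p < i the commutator [e_p, e_(p+1)] kills e_pl; at the odd index p = n this
  last fact is exactly the extra relation indexed by eta. The general bracket [e_ij, e_kl]
  then follows by induction on k through e_kl = [e_k, e_(k-1),l].

  For (2) and (3) write x_i = e_(m+n),i. Since x_l = [x_(l+1), e_l] and e_(m+n) commutes with
  e_l for l < m + n - 1, the statement that e_(m+n) kills [x_j, x_k] propagates from the four
  corner pairs with j, k >= m + n - 2 to all pairs; at the corner it is a consequence of the
  cubic Serre relation (ad e_(m+n))^3 e_(m+n-1) = 0, which is where 2 and 3 have to be
  invertible. A downward induction on i replaces e_(m+n) = x_(m+n) by x_i, giving (2), and
  (3) follows from (2) by the Jacobi identity.\<close>

lemma ssign_False_left [simp]: "ssign False q x = x"
  by (simp add: ssign_def)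

lemma ssign_False_right [simp]: "ssign p False x = x"
  by (simp add: ssign_def)

lemma ssign_True_True [simp]: "ssign True True x = - x"
  by (simp add: ssign_def)

lemma ssign_zero [simp]: "ssign p q 0 = 0"
  by (simp add: ssign_def)

locale lie_superalg =
  fixes sc :: "'k::field \<Rightarrow> 'v::ab_group_add \<Rightarrow> 'v"
    and V0 V1 :: "'v set"
    and br :: "'v \<Rightarrow> 'v \<Rightarrow> 'v"
  assumes lie_superalgebra: "lie_superalgebra sc V0 V1 br"
begin

sublocale vector_space sc
  using lie_superalgebra unfolding lie_superalgebra_def by (elim conjE)

abbreviation V :: "bool \<Rightarrow> 'v set" where
  "V p \<equiv> hom_part V0 V1 p"

definition homogeneous :: "'v \<Rightarrow> bool" where
  "homogeneous x \<longleftrightarrow> (\<exists>p. x \<in> V p)"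

lemma homogeneousI [intro]: "x \<in> V p \<Longrightarrow> homogeneous x"
  by (auto simp: homogeneous_def)

lemma bracket_add_left: "br (x + y) z = br x z + br y z"
  using lie_superalgebra unfolding lie_superalgebra_def by (elim conjE) meson

lemma bracket_add_right: "br x (y + z) = br x y + br x z"
  using lie_superalgebra unfolding lie_superalgebra_def by (elim conjE) meson

lemma bracket_scale_left [simp]: "br (sc c x) y = sc c (br x y)"
  using lie_superalgebra unfolding lie_superalgebra_def by (elim conjE) meson

lemma bracket_scale_right [simp]: "br x (sc c y) = sc c (br x y)"
  using lie_superalgebra unfolding lie_superalgebra_def by (elim conjE) meson

lemma bracket_parity: "x \<in> V p \<Longrightarrow> y \<in> V q \<Longrightarrow> br x y \<in> V (p \<noteq> q)"
  using lie_superalgebra unfolding lie_superalgebra_def by (elim conjE) meson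

lemma super_antisym: "x \<in> V p \<Longrightarrow> y \<in> V q \<Longrightarrow> br x y = - ssign p q (br y x)"
  using lie_superalgebra unfolding lie_superalgebra_def by (elim conjE) meson

lemma super_jacobi:
  "x \<in> V p \<Longrightarrow> y \<in> V q \<Longrightarrow> z \<in> V r \<Longrightarrow>
    br x (br y z) = br (br x y) z + ssign p q (br y (br x z))"
  using lie_superalgebra unfolding lie_superalgebra_def by (elim conjE) meson

lemma bracket_zero_left [simp]: "br 0 y = 0"
  using bracket_add_left[of 0 0 y] by simp

lemma bracket_zero_right [simp]: "br x 0 = 0"
  using bracket_add_right[of x 0 0] by simp

lemma bracket_minus_left [simp]: "br (- x) y = - br x y"
  using bracket_add_left[of x "- x" y] by (simp add: add_eq_0_iff)

lemma bracket_minus_right [simp]: "br x (- y) = - br x y"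
  using bracket_add_right[of x y "- y"] by (simp add: add_eq_0_iff)

lemma bracket_diff_right [simp]: "br x (y - z) = br x y - br x z"
  using bracket_add_right[of x y "- z"] by simp

lemma bracket_ssign_left [simp]: "br (ssign p q x) y = ssign p q (br x y)"
  by (simp add: ssign_def)

lemma bracket_ssign_right [simp]: "br y (ssign p q x) = ssign p q (br y x)"
  by (simp add: ssign_def)

lemma homogeneous_bracket: "homogeneous x \<Longrightarrow> homogeneous y \<Longrightarrow> homogeneous (br x y)"
  unfolding homogeneous_def using bracket_parity by blast

lemma bracket_swap_zero:
  assumes "homogeneous x" "homogeneous y" "br y x = 0"
  shows "br x y = 0"
proof -
  obtain p q where "x \<in> V p" "y \<in> V q"
    using assms(1,2) by (auto simp: homogeneous_def)
  from super_antisym[OF this] show ?thesis using assms(3) by simp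
qed

lemma bracket_swap_zero_left:
  assumes "homogeneous a" "homogeneous b" "br (br b a) c = 0"
  shows "br (br a b) c = 0"
proof -
  obtain p q where "a \<in> V p" "b \<in> V q"
    using assms(1,2) by (auto simp: homogeneous_def)
  from super_antisym[OF this] show ?thesis using assms(3) by simp
qed

lemma bracket_swap_zero_right:
  assumes "homogeneous a" "homogeneous b" "br c (br b a) = 0"
  shows "br c (br a b) = 0"
proof -
  obtain p q where "a \<in> V p" "b \<in> V q"
    using assms(1,2) by (auto simp: homogeneous_def)
  from super_antisym[OF this] show ?thesis using assms(3) by simp
qed

lemma homogeneous_jacobi:
  assumes "homogeneous x" "homogeneous y" "homogeneous z"
  obtains p q where "br x (br y z) = br (br x y) z + ssign p q (br y (br x z))"
proof -
  obtain p q r where "x \<in> V p" "y \<in> V q" "z \<in> V r"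
    using assms by (auto simp: homogeneous_def)
  from super_jacobi[OF this] show ?thesis by (rule that)
qed

context
  fixes x y z
  assumes homogeneous: "homogeneous x" "homogeneous y" "homogeneous z"
begin

lemma jacobi_assoc: "br y (br x z) = 0 \<Longrightarrow> br x (br y z) = br (br x y) z"
  by (rule homogeneous_jacobi[OF homogeneous]) (metis add_0_right add_0_left ssign_zero)

lemma jacobi_zero: "br (br x y) z = 0 \<Longrightarrow> br y (br x z) = 0 \<Longrightarrow> br x (br y z) = 0"
  by (rule homogeneous_jacobi[OF homogeneous]) (metis add_0_right add_0_left ssign_zero)

lemma jacobi_zero_bracket: "br x (br y z) = 0 \<Longrightarrow> br y (br x z) = 0 \<Longrightarrow> br (br x y) z = 0"
  by (rule homogeneous_jacobi[OF homogeneous]) (metis add_0_right add_0_left ssign_zero)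

end

lemma ad_square_bracket_zero:
  assumes "homogeneous a" "homogeneous b" "homogeneous w"
    and "br a (br a b) = 0" "br a w = 0"
  shows "br a (br a (br b w)) = 0"
proof -
  have "br a (br b w) = br (br a b) w"
    using jacobi_assoc[OF assms(1-3)] assms(5) by simp
  moreover have "br a (br (br a b) w) = 0"
    using jacobi_zero[OF assms(1) homogeneous_bracket[OF assms(1,2)] assms(3)] assms(4,5) by simp
  ultimately show ?thesis by simp
qed

lemma double_eq_zero:
  assumes "(2::'k) \<noteq> 0" "x + x = (0::'v)"
  shows "x = 0"
proof -
  have "sc 2 x = x + x"
    using scale_left_distrib[of 1 1 x] by simp
  then show ?thesis using assms by simp
qed

lemma triple_eq_zero:
  assumes "(3::'k) \<noteq> 0" "x + x + x = (0::'v)"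
  shows "x = 0"
proof -
  have "sc 3 x = x + x + x"
    using scale_left_distrib[of 2 1 x] scale_left_distrib[of 1 1 x] by simp
  then show ?thesis using assms by simp
qed

lemma even_bracket_self:
  assumes "(2::'k) \<noteq> 0" "x \<in> V False"
  shows "br x x = 0"
proof -
  have "br x x + br x x = 0"
    using super_antisym[OF assms(2) assms(2)] by (simp add: eq_neg_iff_add_eq_0)
  then show ?thesis by (rule double_eq_zero[OF assms(1)])
qed

text \<open>The square of x has twice the weight of x.\<close>
lemma bracket_self_zero_if_weight:
  assumes "(2::'k) \<noteq> 0" "h \<in> V False" "x \<in> V p"
    and "br h x = sc c x" "c \<noteq> 0" "br h (br x x) = 0"
  shows "br x x = 0"
proof -
  have "br h (br x x) = sc c (br x x + br x x)"
    using super_jacobi[OF assms(2,3,3)] assms(4) by (simp add: scale_right_distrib)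
  then have "br x x + br x x = 0" using assms(5,6) by simp
  then show ?thesis by (rule double_eq_zero[OF assms(1)])
qed

lemma bracket_brackets_zero:
  assumes "(2::'k) \<noteq> 0" "a \<in> V False" "homogeneous b" "homogeneous w"
    and "br a (br a w) = 0" "br b w = 0" "br (br a b) a = 0"
  shows "br (br a b) (br a w) = 0"
proof -
  obtain q r where b: "b \<in> V q" and w: "w \<in> V r"
    using assms(3,4) by (auto simp: homogeneous_def)
  have ab: "br a b \<in> V q" using bracket_parity[OF assms(2) b] by simp
  have "br (br a b) (br a w) = br a (br b (br a w))"
    using super_jacobi[OF assms(2) b bracket_parity[OF assms(2) w]] assms(5) by simp
  also have "br b (br a w) = - br (br a b) w"
    using super_jacobi[OF assms(2) b w] assms(6) by (simp add: eq_neg_iff_add_eq_0 add.commute)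
  also have "br a (- br (br a b) w) = - br (br a b) (br a w)"
    using super_jacobi[OF ab assms(2) w] assms(7) by simp
  finally have "br (br a b) (br a w) + br (br a b) (br a w) = 0"
    by (simp add: eq_neg_iff_add_eq_0)
  then show ?thesis by (rule double_eq_zero[OF assms(1)])
qed

subsection \<open>Consequences of a cubic Serre relation\<close>

text \<open>Here a and b play the roles of e_(m+n) and e_(m+n-1); these facts settle the corner
  cases of part (2).\<close>

context
  fixes a b :: 'v and p :: bool
  assumes two: "(2::'k) \<noteq> 0" and three: "(3::'k) \<noteq> 0"
    and a_even: "a \<in> V False" and b_parity: "b \<in> V p"
    and serre_right: "br (br a b) b = 0"
    and serre_left: "br a (br a (br a b)) = 0"
begin

lemma ab_parity: "br a b \<in> V p"
  using bracket_parity[OF a_even b_parity] by simp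

lemma aab_parity: "br a (br a b) \<in> V p"
  using bracket_parity[OF a_even ab_parity] by simp

lemma serre_cubic_bracket: "br (br a (br a b)) (br a b) = 0"
proof (cases p)
  case False
  then have u: "br a b \<in> V False"
    using ab_parity by simp
  have "br (br a (br a b)) b = 0"
    using super_jacobi[OF a_even u b_parity] serre_right even_bracket_self[OF two u] by simp
  moreover have "br (br a (br a b)) a = 0"
    using bracket_swap_zero[OF homogeneousI[OF aab_parity] homogeneousI[OF a_even] serre_left] .
  ultimately show ?thesis
    using jacobi_zero[OF homogeneousI[OF aab_parity] homogeneousI[OF a_even]
        homogeneousI[OF b_parity]]
    by simp
next
  case True
  let ?u = "br a b" and ?v = "br a (br a b)"
  have u: "?u \<in> V True" and v: "?v \<in> V True"
    using ab_parity aab_parity True by simp_all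
  have "br ?u ?u = - br ?v b"
    using super_jacobi[OF u a_even b_parity] super_antisym[OF u a_even] serre_right by simp
  then have "br a (br ?u ?u) = - br ?v ?u"
    using super_jacobi[OF a_even v b_parity] serre_left by simp
  moreover have "br a (br ?u ?u) = br ?v ?u + br ?v ?u"
    using super_jacobi[OF a_even u u] super_antisym[OF u v] by simp
  ultimately have "br ?v ?u + br ?v ?u + br ?v ?u = 0"
    by (simp add: eq_neg_iff_add_eq_0 add.assoc)
  then show ?thesis by (rule triple_eq_zero[OF three])
qed

lemma serre_cubic_square: "br a (br (br a b) (br a b)) = 0"
proof -
  have ab: "homogeneous (br a b)" and aab: "homogeneous (br a (br a b))"
    using ab_parity aab_parity by auto
  have "br (br a b) (br a (br a b)) = 0"
    using bracket_swap_zero[OF ab aab serre_cubic_bracket] .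
  then show ?thesis
    using jacobi_zero[OF homogeneousI[OF a_even] ab ab] serre_cubic_bracket by simp
qed

lemma serre_cubic_chain_odd:
  assumes "p" "c \<in> V q" "br a c = 0"
  shows "br a (br (br a b) (br a (br b c))) = 0"
proof -
  let ?u = "br a b" and ?v = "br a (br a b)"
  have u: "?u \<in> V True" and v: "?v \<in> V True"
    using ab_parity aab_parity assms(1) by simp_all
  have w: "br a (br b c) = br ?u c"
    using super_jacobi[OF a_even b_parity assms(2)] assms(3) by simp
  have "br a (br ?u c) = br ?v c"
    using super_jacobi[OF a_even u assms(2)] assms(3) by simp
  moreover have "br ?v (br ?u c) = - br ?u (br ?v c)"
    using super_jacobi[OF v u assms(2)] super_antisym[OF v u] serre_cubic_bracket by simp
  ultimately show ?thesis
    using super_jacobi[OF a_even u bracket_parity[OF u assms(2)]] w by simp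
qed

lemma serre_cubic_chain_even:
  assumes "\<not> p" "c \<in> V q" "br a c = 0" "br b (br b c) = 0"
  shows "br a (br (br a b) (br a (br b c))) = 0"
proof -
  let ?u = "br a b" and ?v = "br a (br a b)" and ?t = "br b c" and ?w = "br a (br b c)"
  have b: "b \<in> V False" and u: "?u \<in> V False" and v: "?v \<in> V False"
    using b_parity ab_parity aab_parity assms(1) by simp_all
  have t: "?t \<in> V q" and w: "?w \<in> V q" and aw: "br a ?w \<in> V q"
    using bracket_parity[OF b assms(2)] bracket_parity[OF a_even] by simp_all
  have w_eq: "?w = br ?u c"
    using super_jacobi[OF a_even b assms(2)] assms(3) by simp
  have aw_eq: "br a ?w = br ?v c"
    using super_jacobi[OF a_even u assms(2)] assms(3) w_eq by simp
  have aaw: "br a (br a ?w) = 0"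
    using super_jacobi[OF a_even v assms(2)] serre_left assms(3) aw_eq by simp
  have sum: "br ?u ?t + br b ?w = 0"
    using super_jacobi[OF a_even b t] assms(4) by simp
  have "br b ?w = br ?u ?t"
    using super_jacobi[OF b u assms(2)] super_antisym[OF b u] serre_right w_eq by simp
  with sum have "br b ?w = 0"
    using double_eq_zero[OF two] by metis
  then have "br ?u ?w = - br b (br a ?w)"
    using super_jacobi[OF a_even b w] by (simp add: eq_neg_iff_add_eq_0)
  then have first: "br a (br ?u ?w) = - br ?u (br a ?w)"
    using super_jacobi[OF a_even b aw] aaw by simp
  have second: "br a (br ?u ?w) = br ?v ?w + br ?u (br a ?w)"
    using super_jacobi[OF a_even u w] by simp
  have third: "br ?u (br a ?w) = br ?v ?w"
    using super_jacobi[OF u v assms(2)] super_antisym[OF u v] serre_cubic_bracket aw_eq w_eq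
    by simp
  have "br ?v ?w + br ?v ?w + br ?v ?w = 0"
    using first second third by (simp add: eq_neg_iff_add_eq_0 add.assoc)
  then have "br ?v ?w = 0"
    by (rule triple_eq_zero[OF three])
  then show ?thesis
    using second third by simp
qed

end

end

section \<open>A descent principle for symmetric relations\<close>

text \<open>Applied below to the relation "e_(m+n) kills [e_(m+n),j, e_(m+n),k]".\<close>

context
  fixes R :: "nat \<Rightarrow> nat \<Rightarrow> bool" and N :: nat
  assumes sym: "\<And>j k. j \<in> {1..N} \<Longrightarrow> k \<in> {1..N} \<Longrightarrow> R j k \<Longrightarrow> R k j"
    and descend: "\<And>j l. j \<in> {1..N} \<Longrightarrow> 1 \<le> l \<Longrightarrow> l + 2 \<le> N \<Longrightarrow> j \<noteq> l + 1 \<Longrightarrow>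
      R j (l + 1) \<Longrightarrow> R j l"
    and corner: "R N N" "R N (N - 1)" "R (N - 1) (N - 1)" "3 \<le> N \<Longrightarrow> R (N - 1) (N - 2)"
begin

lemma descent_chain:
  assumes "j \<in> {1..N}" "R j k'" "1 \<le> k" "k \<le> k'" "k' < N" "j \<notin> {k<..k'}"
  shows "R j k"
  using assms(4,6)
proof (induction k rule: inc_induct)
  case base
  then show ?case using assms(2) by simp
next
  case (step l)
  then show ?case
    using descend[of j l] assms(1,3,5) by auto
qed

lemma descent_subdiagonal:
  assumes "1 \<le> k" "k \<le> N - 1"
  shows "R (k + 1) k"
  using assms(2,1)
proof (induction k rule: inc_induct)
  case base
  have "N - 1 + 1 = N"
    using base by linarith
  then show ?case
    using corner(2) by simp
next
  case (step k)
  show ?case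
  proof (cases "k + 2 = N")
    case True
    then show ?thesis
      using corner(4) step.prems by (auto simp: numeral_eq_Suc)
  next
    case False
    have "R (k + 2) k"
      using descend[of "k + 2" k] step False by (simp add: numeral_eq_Suc)
    then have "R k (k + 2)"
      using sym[of "k + 2" k] step False by simp
    then have "R k (k + 1)"
      using descend[of k "k + 1"] step False by (simp add: numeral_eq_Suc)
    then show ?thesis
      using sym[of k "k + 1"] step by simp
  qed
qed

lemma descent_diagonal:
  assumes "k \<in> {1..N}"
  shows "R k k"
proof -
  have "k \<le> N"
    using assms by simp
  then consider "k = N" | "k = N - 1" | "k + 2 \<le> N"
    by linarith
  then show ?thesis
  proof cases
    case 3
    then have "R k (k + 1)"
      using sym[of "k + 1" k] descent_subdiagonal[of k] assms by simp
    then show ?thesis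
      using descend[of k k] 3 assms by simp
  qed (use corner in simp_all)
qed

lemma descent_total:
  assumes "j \<in> {1..N}" "k \<in> {1..N}"
  shows "R j k"
proof -
  have below: "R j k" if jk: "j \<in> {1..N}" "k \<in> {1..N}" "k \<le> j" for j k
  proof -
    consider "j = k" | "j = k + 1" | "k + 2 \<le> j"
      using jk(3) by linarith
    then show ?thesis
    proof cases
      case 1
      then show ?thesis using descent_diagonal jk by simp
    next
      case 2
      then show ?thesis using descent_subdiagonal jk by simp
    next
      case 3
      have "R j (j - 1)"
        using descent_subdiagonal[of "j - 1"] 3 jk by simp
      moreover have "j \<notin> {k<..j - 1}"
        using 3 by simp
      ultimately show ?thesis
        using descent_chain[of j "j - 1" k] 3 jk by simp
    qed
  qed
  show ?thesis
  proof (cases "k \<le> j")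
    case False
    then show ?thesis
      using sym[OF assms(2,1) below[OF assms(2,1)]] by simp
  qed (use below assms in simp)
qed

end

section \<open>Root vectors\<close>

lemma Eij_diag [simp]: "Eij br e j j = e j"
  by (cases j) auto

lemma Eij_step: "j < i \<Longrightarrow> Eij br e i j = br (e i) (Eij br e (i - 1) j)"
  by (cases i) auto

lemma Eij_Suc: "j \<le> i \<Longrightarrow> Eij br e (Suc i) j = br (e (Suc i)) (Eij br e i j)"
  by simp

declare Eij.simps [simp del]

locale km_generators = lie_superalg sc V0 V1 br
  for sc :: "'k::field \<Rightarrow> 'v::ab_group_add \<Rightarrow> 'v" and V0 V1 br +
  fixes e h f :: "nat \<Rightarrow> 'v" and m n :: nat
  assumes m_pos: "1 \<le> m" and n_pos: "1 \<le> n"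
    and two: "(2::'k) \<noteq> 0" and three: "(3::'k) \<noteq> 0"
    and km_rels: "km_rels sc V0 V1 br {1..m + n} {n} (cartan m n) e h f"
begin

abbreviation N :: nat where
  "N \<equiv> m + n"

lemma e_parity: "i \<in> {1..N} \<Longrightarrow> e i \<in> V (i = n)"
  using km_rels unfolding km_rels_def singleton_iff by (elim conjE) meson

lemma f_parity: "i \<in> {1..N} \<Longrightarrow> f i \<in> V (i = n)"
  using km_rels unfolding km_rels_def singleton_iff by (elim conjE) meson

lemma h_even: "i \<in> {1..N} \<Longrightarrow> h i \<in> V False"
  using km_rels unfolding km_rels_def hom_part_def by (elim conjE) meson

lemma bracket_e_f: "i \<in> {1..N} \<Longrightarrow> j \<in> {1..N} \<Longrightarrow> br (e i) (f j) = (if i = j then h i else 0)"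
  using km_rels unfolding km_rels_def by (elim conjE) meson

lemma bracket_e_h:
  "i \<in> {1..N} \<Longrightarrow> j \<in> {1..N} \<Longrightarrow> br (e j) (h i) = sc (- of_int (cartan m n i j)) (e j)"
  using km_rels unfolding km_rels_def by (elim conjE) meson

lemma serre_relations:
  "i \<in> {1..N} \<Longrightarrow> j \<in> {1..N} \<Longrightarrow> j < i \<Longrightarrow>
    adpow br (e i) (nat (1 - nmat (cartan m n) i j)) (e j) = 0 \<and>
    radpow br (e i) (e j) (nat (1 - nmat (cartan m n) j i)) = 0"
  using km_rels unfolding km_rels_def by (elim conjE) meson

lemma eta_relation:
  "k \<in> eta {1..N} {n} (cartan m n) \<Longrightarrow> br (br (e (k + 1)) (e k)) (br (e k) (e (k - 1))) = 0"
  using km_rels unfolding km_rels_def by (elim conjE) meson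

lemma e_homogeneous: "i \<in> {1..N} \<Longrightarrow> homogeneous (e i)"
  using e_parity by blast

lemma e_far_commute:
  assumes "i \<in> {1..N}" "j \<in> {1..N}" "j + 1 < i \<or> i + 1 < j"
  shows "br (e i) (e j) = 0"
proof -
  have "br (e i) (e j) = 0" if "i \<in> {1..N}" "j \<in> {1..N}" "j + 1 < i" for i j
  proof -
    have "cartan m n i j = 0"
      using that by (auto simp: cartan_def)
    then have "nat (1 - nmat (cartan m n) i j) = 1"
      by (simp add: nmat_def)
    then show ?thesis
      using serre_relations[OF that(1,2)] that(3) by (simp add: adpow_def)
  qed
  then show ?thesis
    using assms bracket_swap_zero e_homogeneous by blast
qed

lemma serre_quadratic:
  assumes "1 \<le> j" "j + 1 < N"
  shows "br (e (j + 1)) (br (e (j + 1)) (e j)) = 0"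
proof -
  have "nat (1 - nmat (cartan m n) (j + 1) j) = 2"
    using assms by (simp add: nmat_def cartan_def)
  then show ?thesis
    using serre_relations[of "j + 1" j] assms by (simp add: adpow_def numeral_eq_Suc)
qed

lemma serre_quadratic_right:
  assumes "1 \<le> j" "j + 1 \<le> N"
  shows "br (br (e (j + 1)) (e j)) (e j) = 0"
proof -
  have "nat (1 - nmat (cartan m n) j (j + 1)) = 2"
    using assms by (simp add: nmat_def cartan_def)
  then show ?thesis
    using serre_relations[of "j + 1" j] assms by (simp add: radpow_def numeral_eq_Suc)
qed

lemma serre_cubic: "br (e N) (br (e N) (br (e N) (e (N - 1)))) = 0"
proof -
  have "nat (1 - nmat (cartan m n) N (N - 1)) = 3"
    using m_pos n_pos by (simp add: nmat_def cartan_def)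
  then show ?thesis
    using serre_relations[of N "N - 1"] m_pos n_pos by (simp add: adpow_def numeral_eq_Suc)
qed

lemma eta_relation_odd:
  assumes "2 \<le> n"
  shows "br (br (e (n + 1)) (e n)) (br (e n) (e (n - 1))) = 0"
proof -
  have "n \<in> eta {1..N} {n} (cartan m n)"
    using assms m_pos by (auto simp: eta_def cartan_def)
  then show ?thesis
    by (rule eta_relation)
qed

lemma e_bracket_self:
  assumes "i \<in> {1..N}"
  shows "br (e i) (e i) = 0"
proof (cases "i = n")
  case False
  then show ?thesis
    using even_bracket_self[OF two] e_parity[OF assms] by simp
next
  case True
  have n: "n \<in> {1..N}" and n1: "n + 1 \<in> {1..N}"
    using m_pos n_pos by auto
  have en: "homogeneous (e n)" and en1: "homogeneous (e (n + 1))"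
    and fn1: "homogeneous (f (n + 1))"
    using e_homogeneous[OF n] e_homogeneous[OF n1] f_parity[OF n1] by auto
  have sq: "homogeneous (br (e n) (e n))"
    using homogeneous_bracket[OF en en] .
  have "br (br (e (n + 1)) (e n)) (e n) = 0"
    using serre_quadratic_right[of n] m_pos n_pos by simp
  then have "br (e (n + 1)) (br (e n) (e n)) = 0"
    using jacobi_zero[OF en1 en en] bracket_swap_zero[OF en homogeneous_bracket[OF en1 en]]
    by simp
  moreover have "br (f (n + 1)) (br (e n) (e n)) = 0"
    using jacobi_zero[OF fn1 en en] bracket_swap_zero[OF fn1 en] bracket_e_f[OF n n1] by simp
  ultimately have "br (br (e (n + 1)) (f (n + 1))) (br (e n) (e n)) = 0"
    using jacobi_zero_bracket[OF en1 fn1 sq] by simp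
  then have killed: "br (h (n + 1)) (br (e n) (e n)) = 0"
    using bracket_e_f[OF n1 n1] by simp
  have weight: "br (h (n + 1)) (e n) = sc (of_int (cartan m n (n + 1) n)) (e n)"
    using super_antisym[OF h_even[OF n1] e_parity[OF n]] bracket_e_h[OF n1 n]
    by (simp add: scale_minus_left)
  have "cartan m n (n + 1) n = -1 \<or> cartan m n (n + 1) n = -2"
    by (auto simp: cartan_def)
  then have "(of_int (cartan m n (n + 1) n) :: 'k) \<noteq> 0"
    using two by auto
  then show ?thesis
    using bracket_self_zero_if_weight[OF two h_even[OF n1] e_parity[OF n] weight _ killed] True
    by simp
qed

abbreviation E :: "nat \<Rightarrow> nat \<Rightarrow> 'v" where
  "E \<equiv> Eij br e"

lemma E_homogeneous: "1 \<le> j \<Longrightarrow> j \<le> i \<Longrightarrow> i \<le> N \<Longrightarrow> homogeneous (E i j)"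
proof (induction i)
  case (Suc i)
  then show ?case
    using e_homogeneous homogeneous_bracket
    by (cases "Suc i = j") (simp_all add: Eij_Suc)
qed simp

lemma E_bracket_e_pred:
  "2 \<le> j \<Longrightarrow> j \<le> i \<Longrightarrow> i \<le> N \<Longrightarrow> br (E i j) (e (j - 1)) = E i (j - 1)"
proof (induction i)
  case (Suc i)
  show ?case
  proof (cases "Suc i = j")
    case True
    then show ?thesis using Eij_step[of "j - 1" j br e] Suc.prems by simp
  next
    case False
    have ranges: "Suc i \<in> {1..N}" "j - 1 \<in> {1..N}"
      using Suc.prems by auto
    have "br (e (Suc i)) (e (j - 1)) = 0"
      using e_far_commute[OF ranges] Suc.prems False by auto
    then have "br (e (Suc i)) (br (E i j) (e (j - 1))) = br (E (Suc i) j) (e (j - 1))"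
      using jacobi_assoc[OF e_homogeneous[OF ranges(1)] E_homogeneous[of j i]
          e_homogeneous[OF ranges(2)]] Suc.prems False
      by (simp add: Eij_Suc)
    then show ?thesis
      using Suc False by (simp add: Eij_Suc)
  qed
qed simp

lemma bracket_E_extend_top:
  assumes "homogeneous P" "1 \<le> l" "l \<le> k" "k \<le> i" "i \<le> N" "br P (E k l) = 0"
    and "\<forall>r\<in>{k<..i}. br P (e r) = 0"
  shows "br P (E i l) = 0"
  using assms(4,5,7)
proof (induction i rule: dec_induct)
  case base
  then show ?case using assms(6) by simp
next
  case (step i)
  have "Suc i \<in> {1..N}"
    using step assms(2,3) by auto
  moreover have "br P (E i l) = 0" and "br P (e (Suc i)) = 0"
    using step by auto
  ultimately have "br P (br (e (Suc i)) (E i l)) = 0"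
    using jacobi_zero[OF assms(1) e_homogeneous E_homogeneous[of l i]] step.hyps assms(2,3)
    by simp
  then show ?case
    using step.hyps assms(3) by (simp add: Eij_Suc)
qed

lemma bracket_E_extend_bottom:
  assumes "homogeneous P" "1 \<le> l" "l \<le> j" "j \<le> i" "i \<le> N" "br P (E i j) = 0"
    and "\<forall>r\<in>{l..<j}. br P (e r) = 0"
  shows "br P (E i l) = 0"
  using assms(3,7)
proof (induction l rule: inc_induct)
  case base
  then show ?case using assms(6) by simp
next
  case (step l')
  have "l' \<in> {1..N}"
    using step.hyps assms(2,4,5) by auto
  moreover have "br P (E i (Suc l')) = 0" and "br P (e l') = 0"
    using step by auto
  ultimately have "br P (br (E i (Suc l')) (e l')) = 0"
    using jacobi_zero[OF assms(1) E_homogeneous[of "Suc l'" i] e_homogeneous] step.hyps assms(4,5)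
    by simp
  then show ?case
    using E_bracket_e_pred[of "Suc l'" i] step.hyps assms(2,4,5) by simp
qed

lemma e_bracket_E_far:
  assumes "p \<in> {1..N}" "1 \<le> l" "l \<le> k" "k \<le> N" "k + 1 < p \<or> p + 1 < l"
  shows "br (e p) (E k l) = 0"
proof (rule bracket_E_extend_top[where k = l])
  show "homogeneous (e p)"
    using e_homogeneous[OF assms(1)] .
  show "br (e p) (E l l) = 0" "\<forall>r\<in>{l<..k}. br (e p) (e r) = 0"
    using e_far_commute[OF assms(1)] assms by auto
qed (use assms in auto)

lemma e_bracket_E_top:
  assumes "1 \<le> l" "l \<le> i" "i < N"
  shows "br (e i) (E i l) = 0"
proof -
  consider "l = i" | "l = i - 1" "l < i" | "l + 2 \<le> i"
    using assms(2) by linarith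
  then show ?thesis
  proof cases
    case 1
    then show ?thesis using e_bracket_self assms by simp
  next
    case 2
    then show ?thesis
      using serre_quadratic[of "i - 1"] Eij_step[of l i br e] assms by simp
  next
    case 3
    have ranges: "i \<in> {1..N}" "i - 1 \<in> {1..N}"
      using assms 3 by auto
    have "E i l = br (e i) (br (e (i - 1)) (E (i - 2) l))"
      using Eij_step[of l i br e] Eij_step[of l "i - 1" br e] 3 by (simp add: numeral_eq_Suc)
    moreover have "br (e i) (br (e i) (e (i - 1))) = 0"
      using serre_quadratic[of "i - 1"] assms 3 by simp
    moreover have "br (e i) (E (i - 2) l) = 0"
      using e_bracket_E_far[OF ranges(1)] assms 3 by simp
    ultimately show ?thesis
      using ad_square_bracket_zero[OF e_homogeneous[OF ranges(1)] e_homogeneous[OF ranges(2)]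
          E_homogeneous[of l "i - 2"]] assms 3
      by simp
  qed
qed

lemma commutator_bracket_E_odd:
  assumes "2 \<le> n" "1 \<le> l" "l < n"
  shows "br (br (e n) (e (n + 1))) (E n l) = 0"
proof (rule bracket_E_extend_bottom[where j = "n - 1"])
  have ranges: "n - 1 \<in> {1..N}" "n \<in> {1..N}" "n + 1 \<in> {1..N}"
    using assms m_pos by auto
  then have hs: "homogeneous (e (n - 1))" "homogeneous (e n)" "homogeneous (e (n + 1))"
    using e_homogeneous by auto
  then show "homogeneous (br (e n) (e (n + 1)))"
    using homogeneous_bracket by simp
  have "br (br (e n) (e (n + 1))) (br (e n) (e (n - 1))) = 0"
    using bracket_swap_zero_left[OF hs(2,3) eta_relation_odd[OF assms(1)]] .
  then show "br (br (e n) (e (n + 1))) (E n (n - 1)) = 0"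
    using Eij_step[of "n - 1" n br e] assms(1) by simp
  show "\<forall>r\<in>{l..<n - 1}. br (br (e n) (e (n + 1))) (e r) = 0"
  proof
    fix r
    assume r: "r \<in> {l..<n - 1}"
    then have rN: "r \<in> {1..N}"
      using assms by auto
    have "r + 1 < n"
      using r by auto
    then have "br (e (n + 1)) (e r) = 0" "br (e n) (e r) = 0"
      using e_far_commute[OF ranges(3) rN] e_far_commute[OF ranges(2) rN] by simp_all
    then show "br (br (e n) (e (n + 1))) (e r) = 0"
      using jacobi_zero_bracket[OF hs(2,3) e_homogeneous[OF rN]] by simp
  qed
qed (use assms in auto)

lemma commutator_bracket_E:
  assumes "1 \<le> l" "l \<le> q" "q + 1 \<le> N"
  shows "br (br (e q) (e (q + 1))) (E q l) = 0"
proof -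
  have ranges: "q \<in> {1..N}" "q + 1 \<in> {1..N}"
    using assms by auto
  have hs: "homogeneous (e q)" "homogeneous (e (q + 1))"
    using e_homogeneous[OF ranges(1)] e_homogeneous[OF ranges(2)] .
  have right: "br (br (e q) (e (q + 1))) (e q) = 0"
    using bracket_swap_zero_left[OF hs] serre_quadratic_right[of q] assms by simp
  consider "l = q" | "q = n" "l < q" | "q \<noteq> n" "l < q"
    using assms by linarith
  then show ?thesis
  proof cases
    case 1
    then show ?thesis using right by simp
  next
    case 2
    then show ?thesis using commutator_bracket_E_odd assms by simp
  next
    case 3
    have E_eq: "E q l = br (e q) (E (q - 1) l)"
      using Eij_step[of l q br e] 3 by simp
    have even: "e q \<in> V False"
      using e_parity[OF ranges(1)] 3 by simp
    have "br (e q) (br (e q) (E (q - 1) l)) = 0"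
      using e_bracket_E_top[of l q] assms E_eq by simp
    moreover have "br (e (q + 1)) (E (q - 1) l) = 0"
      using e_bracket_E_far[OF ranges(2)] assms 3 by simp
    ultimately show ?thesis
      using bracket_brackets_zero[OF two even hs(2) E_homogeneous[of l "q - 1"] _ _ right]
        E_eq assms 3
      by simp
  qed
qed

lemma e_bracket_E_inner:
  assumes "1 \<le> l" "l \<le> p" "p < i" "i \<le> N"
  shows "br (e p) (E i l) = 0"
proof (rule bracket_E_extend_top[where k = "p + 1"])
  have ranges: "p \<in> {1..N}" "p + 1 \<in> {1..N}"
    using assms by auto
  show hp: "homogeneous (e p)"
    using e_homogeneous[OF ranges(1)] .
  have "br (e (p + 1)) (br (e p) (E p l)) = 0"
    using e_bracket_E_top[of l p] assms by simp
  then have "br (e p) (br (e (p + 1)) (E p l)) = br (br (e p) (e (p + 1))) (E p l)"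
    using jacobi_assoc[OF hp e_homogeneous[OF ranges(2)] E_homogeneous[of l p]] assms by simp
  then show "br (e p) (E (p + 1) l) = 0"
    using commutator_bracket_E[of l p] assms by (simp add: Eij_Suc)
  show "\<forall>r\<in>{p + 1<..i}. br (e p) (e r) = 0"
    using e_far_commute[OF ranges(1)] assms by auto
qed (use assms in auto)

lemma E_bracket_e:
  assumes "1 \<le> j" "j \<le> i" "i \<le> N" "1 \<le> k" "k \<le> i" "k < N"
  shows "br (E i j) (e k) = (if j - 1 = k then E i k else 0)"
proof (cases "j - 1 = k")
  case True
  then show ?thesis
    using E_bracket_e_pred[of j i] assms by simp
next
  case False
  have k: "k \<in> {1..N}"
    using assms by simp
  consider "k + 1 < j" | "j \<le> k" "k = i" | "j \<le> k" "k < i"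
    using False assms by linarith
  then have "br (e k) (E i j) = 0"
  proof cases
    case 1
    then show ?thesis using e_bracket_E_far[OF k] assms by simp
  next
    case 2
    then show ?thesis using e_bracket_E_top[of j i] assms by simp
  next
    case 3
    then show ?thesis using e_bracket_E_inner[of j k i] assms by simp
  qed
  then show ?thesis
    using bracket_swap_zero[OF E_homogeneous[of j i] e_homogeneous[OF k]] assms False by simp
qed

lemma E_bracket_E:
  "1 \<le> l \<Longrightarrow> l \<le> k \<Longrightarrow> 1 \<le> j \<Longrightarrow> j \<le> i \<Longrightarrow> i \<le> N \<Longrightarrow> k < N \<Longrightarrow>
    k < i \<or> (k = i \<and> l \<le> j) \<Longrightarrow> br (E i j) (E k l) = (if j - 1 = k then E i l else 0)"
proof (induction k arbitrary: j)
  case (Suc k)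
  have "Suc k \<le> i"
    using Suc.prems by auto
  show ?case
  proof (cases "l = Suc k")
    case True
    then show ?thesis
      using E_bracket_e[of j i "Suc k"] Suc.prems \<open>Suc k \<le> i\<close> by simp
  next
    case False
    have "Suc k \<in> {1..N}"
      using Suc.prems by simp
    then have "homogeneous (E i j)" "homogeneous (e (Suc k))" "homogeneous (E k l)"
      using E_homogeneous[of j i] e_homogeneous E_homogeneous[of l k] Suc.prems False by simp_all
    then obtain p q where
      "br (E i j) (br (e (Suc k)) (E k l)) =
        br (br (E i j) (e (Suc k))) (E k l) + ssign p q (br (e (Suc k)) (br (E i j) (E k l)))"
      by (rule homogeneous_jacobi)
    moreover have "E (Suc k) l = br (e (Suc k)) (E k l)"
      using Suc.prems False by (simp add: Eij_Suc)
    ultimately have jacobi: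
      "br (E i j) (E (Suc k) l) =
        br (br (E i j) (e (Suc k))) (E k l) + ssign p q (br (e (Suc k)) (br (E i j) (E k l)))"
      by simp
    have outer: "br (E i j) (e (Suc k)) = (if j - 1 = Suc k then E i (Suc k) else 0)"
      using E_bracket_e[of j i "Suc k"] Suc.prems \<open>Suc k \<le> i\<close> by simp
    have inner: "br (E i j) (E k l) = (if j - 1 = k then E i l else 0)"
      using Suc.IH[of j] Suc.prems False \<open>Suc k \<le> i\<close> by simp
    consider "j = Suc (Suc k)" | "j = Suc k" | "j - 1 \<noteq> Suc k" "j - 1 \<noteq> k"
      using Suc.prems(3) by linarith
    then show ?thesis
    proof cases
      case 1
      then have "br (E i (Suc k)) (E k l) = E i l"
        using Suc.IH[of "Suc k"] Suc.prems False \<open>Suc k \<le> i\<close> by simp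
      then show ?thesis
        using jacobi outer inner 1 by simp
    next
      case 2
      then have "br (e (Suc k)) (E i l) = 0"
        using e_bracket_E_top[of l i] e_bracket_E_inner[of l "Suc k" i] Suc.prems
        by (cases "Suc k = i") simp_all
      then show ?thesis
        using jacobi outer inner 2 by simp
    next
      case 3
      then show ?thesis
        using jacobi outer inner by simp
    qed
  qed
qed simp

section \<open>The top row\<close>

abbreviation Etop :: "nat \<Rightarrow> 'v" where
  "Etop j \<equiv> E N j"

lemma Etop_homogeneous: "j \<in> {1..N} \<Longrightarrow> homogeneous (Etop j)"
  by (rule E_homogeneous) auto

lemma Etop_bracket_e:
  "1 \<le> l \<Longrightarrow> l < N \<Longrightarrow> i \<in> {1..N} \<Longrightarrow> br (Etop i) (e l) = (if i - 1 = l then Etop l else 0)"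
  using E_bracket_E[of l l i N] by simp

lemma eN_bracket_Etop_descend:
  assumes "j \<in> {1..N}" "1 \<le> l" "l + 2 \<le> N" "j \<noteq> l + 1"
    and "br (e N) (br (Etop j) (Etop (l + 1))) = 0"
  shows "br (e N) (br (Etop j) (Etop l)) = 0"
proof -
  have ranges: "l \<in> {1..N}" "l + 1 \<in> {1..N}" "N \<in> {1..N}"
    using assms by auto
  have hs: "homogeneous (Etop j)" "homogeneous (Etop (l + 1))"
      "homogeneous (e l)" "homogeneous (e N)"
    using Etop_homogeneous[OF assms(1)] Etop_homogeneous[OF ranges(2)] e_homogeneous[OF ranges(1)]
      e_homogeneous[OF ranges(3)] .
  have "j - 1 \<noteq> l"
    using assms(1,4) by auto
  then have "br (Etop (l + 1)) (br (Etop j) (e l)) = 0"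
    using Etop_bracket_e[OF assms(2) _ assms(1)] assms by simp
  then have "br (Etop j) (br (Etop (l + 1)) (e l)) = br (br (Etop j) (Etop (l + 1))) (e l)"
    using jacobi_assoc[OF hs(1-3)] by simp
  then have "br (Etop j) (Etop l) = br (br (Etop j) (Etop (l + 1))) (e l)"
    using Etop_bracket_e[OF assms(2) _ ranges(2)] assms by simp
  moreover have "br (e N) (e l) = 0"
    using e_far_commute[OF ranges(3,1)] assms by simp
  ultimately show ?thesis
    using jacobi_zero[OF hs(4) homogeneous_bracket[OF hs(1,2)] hs(3)] assms(5) by simp
qed

lemma eN_even: "e N \<in> V False"
  using e_parity[of N] m_pos n_pos by simp

lemma eN_corner:
  shows "br (e N) (br (Etop N) (Etop N)) = 0"
    and "br (e N) (br (Etop N) (Etop (N - 1))) = 0"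
    and "br (e N) (br (Etop (N - 1)) (Etop (N - 1))) = 0"
    and "3 \<le> N \<Longrightarrow> br (e N) (br (Etop (N - 1)) (Etop (N - 2))) = 0"
proof -
  have ranges: "N - 1 \<in> {1..N}" "N - 1 + 1 = N"
    using m_pos n_pos by auto
  have b: "e (N - 1) \<in> V (N - 1 = n)"
    using e_parity[OF ranges(1)] .
  have right: "br (br (e N) (e (N - 1))) (e (N - 1)) = 0"
    using serre_quadratic_right[of "N - 1"] m_pos n_pos ranges(2) by simp
  have Etop_pred: "Etop (N - 1) = br (e N) (e (N - 1))"
    using Eij_step[of "N - 1" N br e] m_pos by simp
  show "br (e N) (br (Etop N) (Etop N)) = 0"
    using e_bracket_self[of N] m_pos by simp
  show "br (e N) (br (Etop N) (Etop (N - 1))) = 0"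
    using serre_cubic Etop_pred by simp
  show "br (e N) (br (Etop (N - 1)) (Etop (N - 1))) = 0"
    using serre_cubic_square[OF two three eN_even b right serre_cubic] Etop_pred by simp
  assume "3 \<le> N"
  then have c: "N - 2 \<in> {1..N}" "e (N - 2) \<in> V (N - 2 = n)"
    and indices: "N - 2 + 1 = N - 1" "N - 2 + 1 < N"
    using e_parity[of "N - 2"] by auto
  have "Etop (N - 2) = br (e N) (br (e (N - 1)) (e (N - 2)))"
    using Eij_step[of "N - 2" N br e] Eij_step[of "N - 2" "N - 1" br e] \<open>3 \<le> N\<close>
    by (simp add: numeral_eq_Suc)
  moreover have "br (e N) (e (N - 2)) = 0"
    using e_far_commute[OF _ c(1), of N] indices by simp
  moreover have "br (e (N - 1)) (br (e (N - 1)) (e (N - 2))) = 0"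
    using serre_quadratic[of "N - 2"] c(1) indices by simp
  ultimately show "br (e N) (br (Etop (N - 1)) (Etop (N - 2))) = 0"
    using serre_cubic_chain_even[OF two three eN_even b right serre_cubic _ c(2)]
      serre_cubic_chain_odd[OF two three eN_even b right serre_cubic _ c(2)] Etop_pred
    by (cases "N - 1 = n") simp_all
qed

lemma eN_bracket_Etop_Etop:
  assumes "j \<in> {1..N}" "k \<in> {1..N}"
  shows "br (e N) (br (Etop j) (Etop k)) = 0"
proof (rule descent_total[where R = "\<lambda>j k. br (e N) (br (Etop j) (Etop k)) = 0"])
  show "br (e N) (br (Etop k) (Etop j)) = 0"
    if "j \<in> {1..N}" "k \<in> {1..N}" "br (e N) (br (Etop j) (Etop k)) = 0" for j k
    using bracket_swap_zero_right[OF Etop_homogeneous Etop_homogeneous] that by blast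
qed (use eN_bracket_Etop_descend eN_corner assms in auto)

lemma Etop_bracket_Etop_Etop:
  assumes "i \<in> {1..N}" "j \<in> {1..N}" "k \<in> {1..N}"
  shows "br (Etop i) (br (Etop j) (Etop k)) = 0"
proof -
  from assms(1) have "i \<le> N" "1 \<le> i"
    by auto
  then show ?thesis
    using assms(2,3)
  proof (induction i arbitrary: j k rule: inc_induct)
    case base
    then show ?case
      using eN_bracket_Etop_Etop by simp
  next
    case (step i)
    let ?X = "Etop (Suc i)" and ?Y = "br (Etop j) (Etop k)"
    have ranges: "i \<in> {1..N}" "Suc i \<in> {1..N}"
      using step by auto
    have hs: "homogeneous ?X" "homogeneous (e i)" "homogeneous (Etop j)" "homogeneous (Etop k)"
      using Etop_homogeneous e_homogeneous ranges step.prems by auto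
    obtain p q where
      "br (Etop j) (br (Etop k) (e i)) = br ?Y (e i) + ssign p q (br (Etop k) (br (Etop j) (e i)))"
      using homogeneous_jacobi[OF hs(3,4,2)] .
    then have "br ?Y (e i) =
        br (Etop j) (br (Etop k) (e i)) - ssign p q (br (Etop k) (br (Etop j) (e i)))"
      by (simp add: eq_diff_eq)
    moreover have "br ?X (br (Etop j) (br (Etop k) (e i))) = 0"
      and "br ?X (br (Etop k) (br (Etop j) (e i))) = 0"
      using Etop_bracket_e[of i] step by auto
    ultimately have "br ?X (br ?Y (e i)) = 0"
      by simp
    then have "br ?X (br (e i) ?Y) = 0"
      using bracket_swap_zero_right[OF hs(2) homogeneous_bracket[OF hs(3,4)]] by simp
    moreover have "br (e i) (br ?X ?Y) = 0"
      using step by simp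
    ultimately have "br (br ?X (e i)) ?Y = 0"
      using jacobi_zero_bracket[OF hs(1,2) homogeneous_bracket[OF hs(3,4)]] by simp
    then show ?case
      using Etop_bracket_e[of i "Suc i"] step.hyps ranges by simp
  qed
qed

lemma Etop_brackets_zero:
  assumes "i \<in> {1..N}" "j \<in> {1..N}" "k \<in> {1..N}" "l \<in> {1..N}"
  shows "br (br (Etop i) (Etop j)) (br (Etop k) (Etop l)) = 0"
proof -
  have hs: "homogeneous (br (Etop i) (Etop j))" "homogeneous (Etop k)" "homogeneous (Etop l)"
    using Etop_homogeneous homogeneous_bracket assms by auto
  have "br (br (Etop i) (Etop j)) (Etop r) = 0" if "r \<in> {1..N}" for r
    using bracket_swap_zero[OF hs(1) Etop_homogeneous[OF that]]
      Etop_bracket_Etop_Etop[OF that assms(1,2)] by simp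
  then show ?thesis
    using jacobi_zero[OF hs] assms(3,4) by simp
qed

end

theorem lemma4p3:
  fixes sc :: "'k::field \<Rightarrow> 'v::ab_group_add \<Rightarrow> 'v"
    and br :: "'v \<Rightarrow> 'v \<Rightarrow> 'v"
    and V0 V1 :: "'v set"
    and e h f :: "nat \<Rightarrow> 'v"
    and m n :: nat
  assumes "m \<ge> 1" and "n \<ge> 1"
    and "(2::'k) \<noteq> 0" and "(3::'k) \<noteq> 0"
    and "lie_superalgebra sc V0 V1 br"
    and "km_rels sc V0 V1 br {1..m+n} {n} (cartan m n) e h f"
  shows "(\<forall>i\<in>{1..m+n}. \<forall>j\<in>{1..m+n}. \<forall>k\<in>{1..m+n}. \<forall>l\<in>{1..m+n}.
            i \<ge> j \<and> k \<ge> l \<and> (i > k \<or> (i = k \<and> j \<ge> l)) \<and> k < m + n \<longrightarrow>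
            br (Eij br e i j) (Eij br e k l) = (if j - 1 = k then Eij br e i l else 0))
       \<and> (\<forall>i\<in>{1..m+n}. \<forall>j\<in>{1..m+n}. \<forall>k\<in>{1..m+n}.
            br (Eij br e (m+n) i) (br (Eij br e (m+n) j) (Eij br e (m+n) k)) = 0)
       \<and> (\<forall>i\<in>{1..m+n}. \<forall>j\<in>{1..m+n}. \<forall>k\<in>{1..m+n}. \<forall>l\<in>{1..m+n}.
            br (br (Eij br e (m+n) i) (Eij br e (m+n) j))
               (br (Eij br e (m+n) k) (Eij br e (m+n) l)) = 0)"
proof -
  interpret km_generators sc V0 V1 br e h f m n
    using assms by unfold_locales
  show ?thesis
  proof (intro conjI ballI impI)
    fix i j k l
    assume "i \<in> {1..m + n}" "j \<in> {1..m + n}" "k \<in> {1..m + n}" "l \<in> {1..m + n}"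
      and "i \<ge> j \<and> k \<ge> l \<and> (i > k \<or> (i = k \<and> j \<ge> l)) \<and> k < m + n"
    then show "br (Eij br e i j) (Eij br e k l) = (if j - 1 = k then Eij br e i l else 0)"
      using E_bracket_E[of l k j i] by auto
  qed (use Etop_bracket_Etop_Etop Etop_brackets_zero in auto)
qed

end
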